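(* Let $(X,d)$ be a finite metric space and $\mathcal{Y}=(Y_i,d_i)_{i\in I}$ a finite family of metric spaces. If $X$ embeds stochastically into $\mathcal{Y}$ with distortion $D$, then $Wa(X)$ embeds stochastically into the family $(Wa(Y_i))_{i\in I}$ with distortion $D$. More precisely, if the numbers $p_i$ and maps $f_i:X\to Y_i$ realize the stochastic embedding of $X$, then the same $p_i$ and the push-forward maps $(f_i)_*:Wa(X)\to Wa(Y_i)$, $\mu\mapsto (f_i)_*\mu$, realize a stochastic embedding of $Wa(X)$ with distortion $D$.
   Context: For a metric space $(Y,d)$, $P_1(Y)$ is the set of Borel probability measures on $Y$ with finite first moment, and $Wa(Y)$ is $P_1(Y)$ with the Wasserstein distance $Wa(\mu,\nu)=\inf_\pi\int d(x,y)\,d\pi(x,y)$, the infimum over couplings $\pi$ (probability measures on $Y\times Y$ with marginals $\mu,\nu$). A metric space $(X,d)$ embeds stochastically with distortion $D\ge1$ into a finite family $(Y_i,d_i)_{i\in I}$ of metric spaces if there are numbers $p_i\ge0$ with $\sum_i p_i=1$ and maps $f_i:X\to Y_i$ such that each $f_i$ is non-contracting ($d_i(f_i(x),f_i(y))\ge d(x,y)$) and $\sum_i p_i d_i(f_i(x),f_i(y))\le D\,d(x,y)$ for all $x,y\in X$. *)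

theory Defs
  imports "HOL-Probability.Probability"
begin

definition borel_of :: "'a topology \<Rightarrow> 'a measure" where
  "borel_of T = sigma (topspace T) {U. openin T U}"

definition mborel :: "'a set \<Rightarrow> ('a \<Rightarrow> 'a \<Rightarrow> real) \<Rightarrow> 'a measure" where
  "mborel M d = borel_of (Metric_space.mtopology M d)"

definition P1 :: "'a set \<Rightarrow> ('a \<Rightarrow> 'a \<Rightarrow> real) \<Rightarrow> 'a measure set" where
  "P1 M d = {\<mu>. sets \<mu> = sets (mborel M d) \<and> prob_space \<mu> \<and>
                 (\<exists>x0\<in>M. (\<integral>\<^sup>+ y. ennreal (d x0 y) \<partial>\<mu>) < \<infinity>)}"

definition couplings :: "'a set \<Rightarrow> ('a \<Rightarrow> 'a \<Rightarrow> real) \<Rightarrow> 'a measure \<Rightarrow> 'a measure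
    \<Rightarrow> ('a \<times> 'a) measure set" where
  "couplings M d \<mu> \<nu> = {\<pi>.
     sets \<pi> = sets (borel_of (prod_topology (Metric_space.mtopology M d) (Metric_space.mtopology M d)))
     \<and> prob_space \<pi>
     \<and> distr \<pi> (mborel M d) fst = \<mu> \<and> distr \<pi> (mborel M d) snd = \<nu>}"

definition wass :: "'a set \<Rightarrow> ('a \<Rightarrow> 'a \<Rightarrow> real) \<Rightarrow> 'a measure \<Rightarrow> 'a measure \<Rightarrow> real" where
  "wass M d \<mu> \<nu> = enn2real (INF \<pi>\<in>couplings M d \<mu> \<nu>. \<integral>\<^sup>+ z. ennreal (d (fst z) (snd z)) \<partial>\<pi>)"

definition stoch_embedding ::
  "'a set \<Rightarrow> ('a \<Rightarrow> 'a \<Rightarrow> real) \<Rightarrow> 'i set \<Rightarrow> ('i \<Rightarrow> 'b set) \<Rightarrow> ('i \<Rightarrow> 'b \<Rightarrow> 'b \<Rightarrow> real)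
    \<Rightarrow> real \<Rightarrow> ('i \<Rightarrow> real) \<Rightarrow> ('i \<Rightarrow> 'a \<Rightarrow> 'b) \<Rightarrow> bool" where
  "stoch_embedding X d I Y dY D p f \<longleftrightarrow>
     finite I \<and> 1 \<le> D \<and> (\<forall>i\<in>I. p i \<ge> 0) \<and> (\<Sum>i\<in>I. p i) = 1 \<and>
     (\<forall>i\<in>I. f i \<in> X \<rightarrow> Y i) \<and>
     (\<forall>i\<in>I. \<forall>x\<in>X. \<forall>y\<in>X. dY i (f i x) (f i y) \<ge> d x y) \<and>
     (\<forall>x\<in>X. \<forall>y\<in>X. (\<Sum>i\<in>I. p i * dY i (f i x) (f i y)) \<le> D * d x y)"

end

theory Submission
  imports Defs
begin

text \<open>Pushing a coupling \<open>\<pi>\<close> of \<open>\<mu>, \<nu>\<close> forward along \<open>f\<^sub>i \<times> f\<^sub>i\<close> gives a coupling of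
  \<open>(f\<^sub>i)\<^sub>*\<mu>, (f\<^sub>i)\<^sub>*\<nu>\<close> of cost \<open>\<integral> d\<^sub>i(f\<^sub>i x, f\<^sub>i y) d\<pi>\<close>; averaging over \<open>i\<close> and using the
  distortion bound pointwise gives \<open>\<Sum>\<^sub>i p\<^sub>i Wa((f\<^sub>i)\<^sub>*\<mu>, (f\<^sub>i)\<^sub>*\<nu>) \<le> D \<integral> d d\<pi>\<close> for every \<open>\<pi>\<close>.
  Conversely, a non-contracting \<open>f\<^sub>i\<close> is injective, so on the finite space \<open>X\<close> it has a measurable
  left inverse; every coupling of the push-forwards lives on \<open>f\<^sub>i(X) \<times> f\<^sub>i(X)\<close> and is thus the
  push-forward of a coupling of \<open>\<mu>, \<nu>\<close>, whose cost is no larger. Hence \<open>(f\<^sub>i)\<^sub>*\<close> is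
  non-contracting too.\<close>

lemma space_borel_of [simp]: "space (borel_of T) = topspace T"
  unfolding borel_of_def by (rule space_measure_of) (auto dest: openin_subset)

lemma sets_borel_of: "sets (borel_of T) = sigma_sets (topspace T) {U. openin T U}"
  unfolding borel_of_def by (rule sets_measure_of) (auto dest: openin_subset)

lemma openin_in_sets_borel_of: "openin T U \<Longrightarrow> U \<in> sets (borel_of T)"
  unfolding sets_borel_of by auto

lemma closedin_in_sets_borel_of:
  assumes "closedin T C"
  shows "C \<in> sets (borel_of T)"
proof -
  have "topspace T - C \<in> sets (borel_of T)"
    using assms by (intro openin_in_sets_borel_of) (simp add: closedin_def)
  then have "space (borel_of T) - (topspace T - C) \<in> sets (borel_of T)"
    by (rule sets.compl_sets)
  with closedin_subset[OF assms] show ?thesis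
    by (simp add: Diff_Diff_Int inf.absorb2)
qed

lemma borel_of_euclidean: "borel_of euclidean = borel"
  by (simp add: borel_of_def borel_def)

lemma measurable_borel_of_continuous_map:
  assumes "continuous_map S T g"
  shows "g \<in> measurable (borel_of S) (borel_of T)"
  unfolding borel_of_def[of T]
proof (rule measurable_measure_of)
  show "{U. openin T U} \<subseteq> Pow (topspace T)"
    by (auto dest: openin_subset)
  show "g \<in> space (borel_of S) \<rightarrow> topspace T"
    using assms by (auto simp: continuous_map_def)
  fix U assume "U \<in> {U. openin T U}"
  then have "openin S {x \<in> topspace S. g x \<in> U}"
    using assms openin_continuous_map_preimage by blast
  then show "g -` U \<inter> space (borel_of S) \<in> sets (borel_of S)"
    by (simp add: openin_in_sets_borel_of Collect_conj_eq Int_commute vimage_def)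
qed

lemma sets_borel_of_finite_t1_space:
  assumes "finite (topspace T)" "t1_space T"
  shows "sets (borel_of T) = Pow (topspace T)"
proof
  show "sets (borel_of T) \<subseteq> Pow (topspace T)"
    using sets.space_closed[of "borel_of T"] by simp
  show "Pow (topspace T) \<subseteq> sets (borel_of T)"
    using assms t1_space_closedin_finite finite_subset
    by (blast intro: closedin_in_sets_borel_of)
qed

lemma measurable_borel_of_const_outside_finite:
  assumes "t1_space T" "finite F" "sets N = Pow (space N)" "g \<in> topspace T \<rightarrow> space N"
    and "\<And>y. y \<in> topspace T - F \<Longrightarrow> g y = c"
  shows "g \<in> measurable (borel_of T) N"
proof (rule measurableI)
  show "g x \<in> space N" if "x \<in> space (borel_of T)" for x
    using that assms(4) by auto
  have finite_sets: "S \<in> sets (borel_of T)" if "S \<subseteq> F \<inter> topspace T" for S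
    using assms(1,2) that t1_space_closedin_finite
    by (metis closedin_in_sets_borel_of finite_Int finite_subset le_inf_iff)
  fix A
  let ?P = "g -` A \<inter> topspace T"
  show "g -` A \<inter> space (borel_of T) \<in> sets (borel_of T)"
  proof (cases "c \<in> A")
    case True
    then have "topspace T - ?P \<in> sets (borel_of T)"
      using assms(5) by (intro finite_sets) blast
    then have "space (borel_of T) - (topspace T - ?P) \<in> sets (borel_of T)"
      by (rule sets.compl_sets)
    then show ?thesis by (simp add: Diff_Diff_Int Int_commute)
  next
    case False
    then show ?thesis
      using assms(5) by (simp, intro finite_sets) blast
  qed
qed

abbreviation mborel_pair :: "'a set \<Rightarrow> ('a \<Rightarrow> 'a \<Rightarrow> real) \<Rightarrow> ('a \<times> 'a) measure" where
  "mborel_pair M d \<equiv> borel_of (prod_topology (Metric_space.mtopology M d) (Metric_space.mtopology M d))"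

context Metric_space
begin

lemma space_mborel [simp]: "space (mborel M d) = M"
  by (simp add: mborel_def)

lemma t1_space_mtopology: "t1_space mtopology"
  by (simp add: Hausdorff_imp_t1_space Hausdorff_space_mtopology)

lemma finite_in_sets_mborel: "finite S \<Longrightarrow> S \<subseteq> M \<Longrightarrow> S \<in> sets (mborel M d)"
  unfolding mborel_def
  by (rule closedin_in_sets_borel_of) (simp add: t1_space_closedin_finite[THEN iffD1, OF t1_space_mtopology])

lemma measurable_fst_mborel: "fst \<in> measurable (mborel_pair M d) (mborel M d)"
  unfolding mborel_def by (rule measurable_borel_of_continuous_map) (rule continuous_map_fst)

lemma measurable_snd_mborel: "snd \<in> measurable (mborel_pair M d) (mborel M d)"
  unfolding mborel_def by (rule measurable_borel_of_continuous_map) (rule continuous_map_snd)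

lemma borel_measurable_dist_pair: "(\<lambda>z. d (fst z) (snd z)) \<in> borel_measurable (mborel_pair M d)"
proof -
  have "continuous_map (prod_topology mtopology mtopology) euclidean (\<lambda>z. d (fst z) (snd z))"
    using continuous_map_metric[of "metric (M, d)"] by (simp add: case_prod_beta')
  then show ?thesis
    using measurable_borel_of_continuous_map by (fastforce simp: borel_of_euclidean)
qed

lemma measurable_fst_snd_coupling:
  assumes "\<sigma> \<in> couplings M d \<mu> \<nu>"
  shows "fst \<in> measurable \<sigma> (mborel M d)" "snd \<in> measurable \<sigma> (mborel M d)"
  using assms measurable_fst_mborel measurable_snd_mborel
  by (simp_all add: couplings_def mborel_def cong: measurable_cong_sets)

lemma borel_measurable_dist: "a \<in> M \<Longrightarrow> d a \<in> borel_measurable (mborel M d)"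
  using measurable_borel_of_continuous_map[of mtopology euclidean "d a"]
    continuous_on_mdist[of a "metric (M, d)"]
  by (simp add: mborel_def borel_of_euclidean)

end

definition transport_cost :: "('a \<Rightarrow> 'a \<Rightarrow> real) \<Rightarrow> ('a \<times> 'a) measure \<Rightarrow> ennreal" where
  "transport_cost c \<pi> = (\<integral>\<^sup>+ z. ennreal (c (fst z) (snd z)) \<partial>\<pi>)"

lemma wass_eq_INF_transport_cost:
  "wass M d \<mu> \<nu> = enn2real (INF \<pi>\<in>couplings M d \<mu> \<nu>. transport_cost d \<pi>)"
  by (simp add: wass_def transport_cost_def)

lemma wass_le_transport_cost:
  assumes "\<pi> \<in> couplings M d \<mu> \<nu>"
  shows "ennreal (wass M d \<mu> \<nu>) \<le> transport_cost d \<pi>"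
proof -
  have "ennreal (wass M d \<mu> \<nu>) \<le> (INF \<pi>\<in>couplings M d \<mu> \<nu>. transport_cost d \<pi>)"
    by (simp add: wass_eq_INF_transport_cost ennreal_enn2real_if)
  also have "\<dots> \<le> transport_cost d \<pi>"
    using assms by (rule INF_lower)
  finally show ?thesis .
qed

text \<open>The finite coupling is needed: \<open>wass\<close> is \<open>0\<close> when every coupling has infinite cost.\<close>
lemma le_wass_if_le_transport_costs:
  assumes "\<And>\<pi>. \<pi> \<in> couplings M d \<mu> \<nu> \<Longrightarrow> ennreal c \<le> transport_cost d \<pi>"
    and "\<pi>\<^sub>0 \<in> couplings M d \<mu> \<nu>" "transport_cost d \<pi>\<^sub>0 < \<infinity>"
  shows "c \<le> wass M d \<mu> \<nu>"
proof -
  have "ennreal c \<le> (INF \<pi>\<in>couplings M d \<mu> \<nu>. transport_cost d \<pi>)"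
    using assms(1) by (rule INF_greatest)
  moreover have "(INF \<pi>\<in>couplings M d \<mu> \<nu>. transport_cost d \<pi>) < \<infinity>"
    using assms(2,3) by (meson INF_lower le_less_trans)
  ultimately have "enn2real (ennreal c) \<le> wass M d \<mu> \<nu>"
    unfolding wass_eq_INF_transport_cost by (intro enn2real_mono) simp_all
  moreover have "0 \<le> wass M d \<mu> \<nu>"
    by (simp add: wass_def)
  ultimately show ?thesis
    by (cases "0 \<le> c") auto
qed

lemma sum_nn_integral_le:
  assumes "finite I" "\<And>i. i \<in> I \<Longrightarrow> 0 \<le> q i" "\<And>i. i \<in> I \<Longrightarrow> g i \<in> borel_measurable M"
    and "\<And>i x. i \<in> I \<Longrightarrow> x \<in> space M \<Longrightarrow> 0 \<le> g i x"
    and "\<And>x. x \<in> space M \<Longrightarrow> (\<Sum>i\<in>I. q i * g i x) \<le> h x"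
  shows "(\<Sum>i\<in>I. ennreal (q i) * (\<integral>\<^sup>+ x. ennreal (g i x) \<partial>M)) \<le> (\<integral>\<^sup>+ x. ennreal (h x) \<partial>M)"
proof -
  have "(\<Sum>i\<in>I. ennreal (q i) * (\<integral>\<^sup>+ x. ennreal (g i x) \<partial>M))
      = (\<integral>\<^sup>+ x. (\<Sum>i\<in>I. ennreal (q i) * ennreal (g i x)) \<partial>M)"
    using assms(3) by (simp add: nn_integral_sum nn_integral_cmult)
  also have "\<dots> \<le> (\<integral>\<^sup>+ x. ennreal (h x) \<partial>M)"
  proof (rule nn_integral_mono)
    fix x assume x: "x \<in> space M"
    have "(\<Sum>i\<in>I. ennreal (q i) * ennreal (g i x)) = ennreal (\<Sum>i\<in>I. q i * g i x)"
      using assms(2,4) x by (simp add: ennreal_mult[symmetric])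
    also have "\<dots> \<le> ennreal (h x)"
      using assms(5) x by (intro ennreal_leI)
    finally show "(\<Sum>i\<in>I. ennreal (q i) * ennreal (g i x)) \<le> ennreal (h x)" .
  qed
  finally show ?thesis .
qed

lemma nn_integral_finite_space_less_top:
  assumes "finite_measure M" "finite (space M)"
  shows "(\<integral>\<^sup>+ x. ennreal (h x) \<partial>M) < \<infinity>"
proof -
  let ?B = "\<Sum>y\<in>space M. \<bar>h y\<bar>"
  have "(\<integral>\<^sup>+ x. ennreal (h x) \<partial>M) \<le> (\<integral>\<^sup>+ x. ennreal ?B \<partial>M)"
    using assms(2) by (intro nn_integral_mono ennreal_leI)
      (meson abs_ge_self abs_ge_zero member_le_sum order_trans)
  also have "\<dots> < \<infinity>"
    using finite_measure.emeasure_finite[OF assms(1)] by (simp add: ennreal_mult_less_top top.not_eq_extremum)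
  finally show ?thesis .
qed

lemma (in prob_space) distr_pair_snd:
  assumes "prob_space N"
  shows "distr (N \<Otimes>\<^sub>M M) M snd = M"
proof -
  interpret N: prob_space N by fact
  interpret pair_sigma_finite N M ..
  have "distr (N \<Otimes>\<^sub>M M) M snd = distr (distr (M \<Otimes>\<^sub>M N) (N \<Otimes>\<^sub>M M) (\<lambda>(x, y). (y, x))) M snd"
    by (simp add: distr_pair_swap[symmetric])
  also have "\<dots> = distr (M \<Otimes>\<^sub>M N) M fst"
    by (subst distr_distr) (auto simp: comp_def case_prod_beta')
  also have "\<dots> = M"
    by (rule N.distr_pair_fst)
  finally show ?thesis .
qed

lemma measurable_if_sets_eq_Pow:
  assumes "sets M = Pow A" "g \<in> A \<rightarrow> space N"
  shows "g \<in> measurable M N"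
  using assms measurable_cong_sets[of M "count_space A" N N] by simp

locale finite_Metric_space = Metric_space +
  assumes finite_M: "finite M"
begin

lemma sets_mborel_eq_Pow: "sets (mborel M d) = Pow M"
  unfolding mborel_def by (subst sets_borel_of_finite_t1_space) (auto simp: finite_M t1_space_mtopology)

lemma sets_mborel_pair_eq_Pow: "sets (mborel_pair M d) = Pow (M \<times> M)"
  by (subst sets_borel_of_finite_t1_space)
    (auto simp: finite_M t1_space_mtopology t1_space_prod_topology)

lemma sets_pair_measure_eq_Pow:
  assumes "sets \<mu> = Pow M" "sets \<nu> = Pow M"
  shows "sets (\<mu> \<Otimes>\<^sub>M \<nu>) = Pow (M \<times> M)"
proof -
  have "sets (\<mu> \<Otimes>\<^sub>M \<nu>) = sets (count_space M \<Otimes>\<^sub>M count_space M)"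
    using assms by (intro sets_pair_measure_cong) simp_all
  also have "\<dots> = sets (count_space (M \<times> M))"
    by (subst pair_measure_countable) (simp_all add: finite_M countable_finite)
  finally show ?thesis
    by simp
qed

lemma measurable_Pair_mborel_pair:
  assumes "h\<^sub>1 \<in> measurable N (mborel M d)" "h\<^sub>2 \<in> measurable N (mborel M d)"
  shows "(\<lambda>z. (h\<^sub>1 z, h\<^sub>2 z)) \<in> measurable N (mborel_pair M d)"
proof -
  have "sets (mborel M d \<Otimes>\<^sub>M mborel M d) = sets (mborel_pair M d)"
    by (simp add: sets_pair_measure_eq_Pow sets_mborel_eq_Pow sets_mborel_pair_eq_Pow)
  then show ?thesis
    using measurable_Pair[OF assms] by (simp cong: measurable_cong_sets)
qed

lemma P1_D:
  assumes "\<mu> \<in> P1 M d"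
  shows "sets \<mu> = Pow M" "space \<mu> = M" "prob_space \<mu>"
  using assms sets_eq_imp_space_eq[of \<mu> "mborel M d"] by (auto simp: P1_def sets_mborel_eq_Pow)

lemma couplings_D:
  assumes "\<pi> \<in> couplings M d \<mu> \<nu>"
  shows "sets \<pi> = Pow (M \<times> M)" "space \<pi> = M \<times> M" "prob_space \<pi>"
    "distr \<pi> (mborel M d) fst = \<mu>" "distr \<pi> (mborel M d) snd = \<nu>"
  using assms sets_eq_imp_space_eq[of \<pi> "mborel_pair M d"]
  by (auto simp: couplings_def mborel_def sets_mborel_pair_eq_Pow)

lemma transport_cost_less_top:
  assumes "\<pi> \<in> couplings M d \<mu> \<nu>"
  shows "transport_cost c \<pi> < \<infinity>"
  unfolding transport_cost_def using couplings_D[OF assms] finite_M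
  by (intro nn_integral_finite_space_less_top prob_space.finite_measure) auto

lemma pair_measure_in_couplings:
  assumes \<mu>: "\<mu> \<in> P1 M d" and \<nu>: "\<nu> \<in> P1 M d"
  shows "\<mu> \<Otimes>\<^sub>M \<nu> \<in> couplings M d \<mu> \<nu>"
proof -
  note P1_D[OF \<mu>] P1_D[OF \<nu>]
  interpret \<mu>: prob_space \<mu> by fact
  interpret \<nu>: prob_space \<nu> by fact
  have "distr (\<mu> \<Otimes>\<^sub>M \<nu>) (mborel M d) fst = distr (\<mu> \<Otimes>\<^sub>M \<nu>) \<mu> fst"
    by (rule distr_cong) (simp_all add: sets_mborel_eq_Pow \<open>sets \<mu> = Pow M\<close>)
  also have "\<dots> = \<mu>"
    by (rule \<nu>.distr_pair_fst)
  finally have "distr (\<mu> \<Otimes>\<^sub>M \<nu>) (mborel M d) fst = \<mu>" .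
  moreover have "distr (\<mu> \<Otimes>\<^sub>M \<nu>) (mborel M d) snd = distr (\<mu> \<Otimes>\<^sub>M \<nu>) \<nu> snd"
    by (rule distr_cong) (simp_all add: sets_mborel_eq_Pow \<open>sets \<nu> = Pow M\<close>)
  moreover have "\<dots> = \<nu>"
    by (rule \<nu>.distr_pair_snd) fact
  ultimately show ?thesis
    using sets_pair_measure_eq_Pow[of \<mu> \<nu>] prob_space_pair[of \<mu> \<nu>]
    by (simp add: couplings_def mborel_def sets_mborel_pair_eq_Pow P1_D[OF \<mu>] P1_D[OF \<nu>])
qed

end

lemma distr_distr_commute:
  assumes "g \<in> measurable M N" "h \<in> measurable N K" "g' \<in> measurable M L" "h' \<in> measurable L K"
    and "\<And>x. x \<in> space M \<Longrightarrow> h (g x) = h' (g' x)"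
  shows "distr (distr M N g) K h = distr (distr M L g') K h'"
  using assms by (simp add: distr_distr comp_def cong: distr_cong)

locale finite_metric_map = X: finite_Metric_space X d + Y: Metric_space Y dY
  for X :: "'a set" and d and Y :: "'b set" and dY +
  fixes f :: "'a \<Rightarrow> 'b"
  assumes f_into: "f \<in> X \<rightarrow> Y"
begin

abbreviation push :: "'a measure \<Rightarrow> 'b measure" where
  "push \<mu> \<equiv> distr \<mu> (mborel Y dY) f"

abbreviation push_pair :: "('a \<times> 'a) measure \<Rightarrow> ('b \<times> 'b) measure" where
  "push_pair \<pi> \<equiv> distr \<pi> (mborel_pair Y dY) (map_prod f f)"

lemma measurable_f: "sets \<mu> = Pow X \<Longrightarrow> f \<in> measurable \<mu> (mborel Y dY)"
  using f_into by (simp add: measurable_if_sets_eq_Pow)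

lemma measurable_map_prod_f:
  "sets \<pi> = Pow (X \<times> X) \<Longrightarrow> map_prod f f \<in> measurable \<pi> (mborel_pair Y dY)"
  by (erule measurable_if_sets_eq_Pow) (use f_into in auto)

lemma push_in_P1:
  assumes "\<mu> \<in> P1 X d"
  shows "push \<mu> \<in> P1 Y dY"
proof -
  note \<mu> = X.P1_D[OF assms]
  obtain x\<^sub>0 where x\<^sub>0: "x\<^sub>0 \<in> X"
    using prob_space.not_empty[OF \<mu>(3)] \<mu>(2) by auto
  then have fx\<^sub>0: "f x\<^sub>0 \<in> Y"
    using f_into by auto
  have "(\<integral>\<^sup>+ y. ennreal (dY (f x\<^sub>0) y) \<partial>push \<mu>) = (\<integral>\<^sup>+ x. ennreal (dY (f x\<^sub>0) (f x)) \<partial>\<mu>)"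
    using measurable_f[OF \<mu>(1)] Y.borel_measurable_dist[OF fx\<^sub>0] by (simp add: nn_integral_distr)
  also have "\<dots> < \<infinity>"
    using \<mu> X.finite_M by (intro nn_integral_finite_space_less_top prob_space.finite_measure) auto
  finally show ?thesis
    using fx\<^sub>0 prob_space.prob_space_distr[OF \<mu>(3) measurable_f[OF \<mu>(1)]] by (auto simp: P1_def)
qed

lemma push_pair_in_couplings:
  assumes "\<pi> \<in> couplings X d \<mu> \<nu>"
  shows "push_pair \<pi> \<in> couplings Y dY (push \<mu>) (push \<nu>)"
proof -
  note \<pi> = X.couplings_D[OF assms]
  note ff = measurable_map_prod_f[OF \<pi>(1)]
  have "distr (push_pair \<pi>) (mborel Y dY) fst = push (distr \<pi> (mborel X d) fst)"
    using \<pi>(1) X.sets_mborel_eq_Pow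
    by (intro distr_distr_commute[OF ff Y.measurable_fst_mborel] measurable_f measurable_if_sets_eq_Pow) auto
  moreover have "distr (push_pair \<pi>) (mborel Y dY) snd = push (distr \<pi> (mborel X d) snd)"
    using \<pi>(1) X.sets_mborel_eq_Pow
    by (intro distr_distr_commute[OF ff Y.measurable_snd_mborel] measurable_f measurable_if_sets_eq_Pow) auto
  ultimately show ?thesis
    using \<pi> prob_space.prob_space_distr[OF \<pi>(3) ff] by (simp add: couplings_def mborel_def)
qed

lemma transport_cost_push_pair:
  assumes "\<pi> \<in> couplings X d \<mu> \<nu>"
  shows "transport_cost dY (push_pair \<pi>) = transport_cost (\<lambda>x y. dY (f x) (f y)) \<pi>"
  unfolding transport_cost_def
  by (subst nn_integral_distr[OF measurable_map_prod_f[OF X.couplings_D(1)[OF assms]]])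
    (simp_all add: Y.borel_measurable_dist_pair)

lemma measurable_left_inverse:
  assumes "inj_on f X" "X \<noteq> {}"
  obtains g where "g \<in> measurable (mborel Y dY) (mborel X d)" "\<And>x. x \<in> X \<Longrightarrow> g (f x) = x"
proof -
  obtain x\<^sub>0 where x\<^sub>0: "x\<^sub>0 \<in> X"
    using assms(2) by blast
  define g where "g y = (if y \<in> f ` X then inv_into X f y else x\<^sub>0)" for y
  have "g \<in> measurable (borel_of Y.mtopology) (mborel X d)"
    using x\<^sub>0 X.finite_M by (intro measurable_borel_of_const_outside_finite[where F = "f ` X" and c = x\<^sub>0])
      (auto simp: Y.t1_space_mtopology X.sets_mborel_eq_Pow g_def inv_into_into)
  moreover have "g (f x) = x" if "x \<in> X" for x
    using that assms(1) by (simp add: g_def)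
  ultimately show ?thesis
    using that by (simp add: mborel_def)
qed

lemma AE_coupling_push_in_image:
  assumes \<mu>: "\<mu> \<in> P1 X d" and \<nu>: "\<nu> \<in> P1 X d" and \<sigma>: "\<sigma> \<in> couplings Y dY (push \<mu>) (push \<nu>)"
  shows "AE z in \<sigma>. fst z \<in> f ` X \<and> snd z \<in> f ` X"
proof -
  have "{y \<in> space (mborel Y dY). y \<in> f ` X} \<in> sets (mborel Y dY)"
    using f_into X.finite_M by (intro Y.finite_in_sets_mborel) auto
  then have push_AE: "AE y in push \<mu>'. y \<in> f ` X" if "\<mu>' \<in> P1 X d" for \<mu>'
    using X.P1_D[OF that] by (simp add: AE_distr_iff measurable_f) (auto intro: AE_I2)
  have \<sigma>_fst: "distr \<sigma> (mborel Y dY) fst = push \<mu>" and \<sigma>_snd: "distr \<sigma> (mborel Y dY) snd = push \<nu>"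
    using \<sigma> by (simp_all add: couplings_def mborel_def)
  have "AE z in \<sigma>. fst z \<in> f ` X"
    using push_AE[OF \<mu>, folded \<sigma>_fst] by (rule AE_distrD[OF Y.measurable_fst_snd_coupling(1)[OF \<sigma>]])
  moreover have "AE z in \<sigma>. snd z \<in> f ` X"
    using push_AE[OF \<nu>, folded \<sigma>_snd] by (rule AE_distrD[OF Y.measurable_fst_snd_coupling(2)[OF \<sigma>]])
  ultimately show ?thesis
    by (simp add: AE_conj_iff)
qed

lemma distr_push_left_inverse:
  assumes "\<mu> \<in> P1 X d" "g \<in> measurable (mborel Y dY) (mborel X d)" "\<And>x. x \<in> X \<Longrightarrow> g (f x) = x"
  shows "distr (push \<mu>) (mborel X d) g = \<mu>"
proof -
  note \<mu> = X.P1_D[OF assms(1)]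
  have "distr (push \<mu>) (mborel X d) g = distr \<mu> (mborel X d) (\<lambda>x. x)"
    using \<mu> assms(3) by (simp add: distr_distr[OF assms(2) measurable_f] comp_def) (rule distr_cong; simp)
  then show ?thesis
    using \<mu>(1) by (simp add: distr_id2 X.sets_mborel_eq_Pow)
qed

text \<open>Every coupling of the push-forwards is concentrated on \<open>f ` X \<times> f ` X\<close>, so pulling it
  back along a left inverse of \<open>f\<close> loses nothing.\<close>
lemma coupling_push_eq_push_pair:
  assumes "inj_on f X" and \<mu>: "\<mu> \<in> P1 X d" and \<nu>: "\<nu> \<in> P1 X d"
    and \<sigma>: "\<sigma> \<in> couplings Y dY (push \<mu>) (push \<nu>)"
  obtains \<pi> where "\<pi> \<in> couplings X d \<mu> \<nu>" "push_pair \<pi> = \<sigma>"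
proof -
  have "X \<noteq> {}"
    using X.P1_D[OF \<mu>] prob_space.not_empty by fastforce
  then obtain g where g: "g \<in> measurable (mborel Y dY) (mborel X d)" and gf: "\<And>x. x \<in> X \<Longrightarrow> g (f x) = x"
    using measurable_left_inverse assms(1) by blast
  from \<sigma> have \<sigma>_sets: "sets \<sigma> = sets (mborel_pair Y dY)" and "prob_space \<sigma>"
    and \<sigma>_fst: "distr \<sigma> (mborel Y dY) fst = push \<mu>" and \<sigma>_snd: "distr \<sigma> (mborel Y dY) snd = push \<nu>"
    by (auto simp: couplings_def mborel_def)
  note \<sigma>_meas = Y.measurable_fst_snd_coupling[OF \<sigma>]
  let ?gg = "\<lambda>z. (g (fst z), g (snd z))"
  have gg: "?gg \<in> measurable \<sigma> (mborel_pair X d)"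
    using measurable_compose[OF \<sigma>_meas(1) g] measurable_compose[OF \<sigma>_meas(2) g]
    by (rule X.measurable_Pair_mborel_pair)
  define \<pi> where "\<pi> = distr \<sigma> (mborel_pair X d) ?gg"
  have "distr \<pi> (mborel X d) fst = distr (distr \<sigma> (mborel Y dY) fst) (mborel X d) g"
    unfolding \<pi>_def by (rule distr_distr_commute[OF gg X.measurable_fst_mborel \<sigma>_meas(1) g]) simp
  moreover have "distr \<pi> (mborel X d) snd = distr (distr \<sigma> (mborel Y dY) snd) (mborel X d) g"
    unfolding \<pi>_def by (rule distr_distr_commute[OF gg X.measurable_snd_mborel \<sigma>_meas(2) g]) simp
  ultimately have "distr \<pi> (mborel X d) fst = \<mu>" "distr \<pi> (mborel X d) snd = \<nu>"
    by (simp_all add: \<sigma>_fst \<sigma>_snd distr_push_left_inverse[OF _ g gf] \<mu> \<nu>)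
  then have "\<pi> \<in> couplings X d \<mu> \<nu>"
    using prob_space.prob_space_distr[OF \<open>prob_space \<sigma>\<close> gg] by (simp add: \<pi>_def couplings_def mborel_def)
  moreover have "push_pair \<pi> = \<sigma>"
  proof -
    have ff: "map_prod f f \<in> measurable (mborel_pair X d) (mborel_pair Y dY)"
      by (simp add: measurable_map_prod_f X.sets_mborel_pair_eq_Pow)
    have "push_pair \<pi> = distr \<sigma> (mborel_pair Y dY) (map_prod f f \<circ> ?gg)"
      unfolding \<pi>_def by (rule distr_distr[OF ff gg])
    also have "\<dots> = distr \<sigma> (mborel_pair Y dY) (\<lambda>z. z)"
    proof (rule distr_cong_AE)
      show "AE z in \<sigma>. (map_prod f f \<circ> ?gg) z = z"
        using AE_coupling_push_in_image[OF \<mu> \<nu> \<sigma>] by eventually_elim (auto simp: gf)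
    qed (use measurable_comp[OF gg ff] \<sigma>_sets in simp_all)
    also have "\<dots> = \<sigma>"
      using \<sigma>_sets by (simp add: distr_id2)
    finally show ?thesis .
  qed
  ultimately show ?thesis
    using that by blast
qed

lemma inj_on_if_noncontracting:
  assumes "\<And>x y. x \<in> X \<Longrightarrow> y \<in> X \<Longrightarrow> d x y \<le> dY (f x) (f y)"
  shows "inj_on f X"
proof (rule inj_onI)
  fix x y assume "x \<in> X" "y \<in> X" "f x = f y"
  moreover have "f y \<in> Y"
    using \<open>y \<in> X\<close> f_into by auto
  ultimately have "d x y \<le> 0"
    using assms[of x y] by simp
  with \<open>x \<in> X\<close> \<open>y \<in> X\<close> show "x = y"
    by (metis X.nonneg X.zero order_antisym)
qed

lemma wass_push_le_transport_cost:
  assumes "\<pi> \<in> couplings X d \<mu> \<nu>"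
  shows "ennreal (wass Y dY (push \<mu>) (push \<nu>)) \<le> transport_cost (\<lambda>x y. dY (f x) (f y)) \<pi>"
  using wass_le_transport_cost[OF push_pair_in_couplings[OF assms]]
  by (simp add: transport_cost_push_pair[OF assms])

lemma wass_le_wass_push:
  assumes noncontracting: "\<And>x y. x \<in> X \<Longrightarrow> y \<in> X \<Longrightarrow> d x y \<le> dY (f x) (f y)"
    and \<mu>: "\<mu> \<in> P1 X d" and \<nu>: "\<nu> \<in> P1 X d"
  shows "wass X d \<mu> \<nu> \<le> wass Y dY (push \<mu>) (push \<nu>)"
proof (rule le_wass_if_le_transport_costs)
  fix \<sigma> assume "\<sigma> \<in> couplings Y dY (push \<mu>) (push \<nu>)"
  then obtain \<pi> where \<pi>: "\<pi> \<in> couplings X d \<mu> \<nu>" and "push_pair \<pi> = \<sigma>"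
    using coupling_push_eq_push_pair inj_on_if_noncontracting[OF noncontracting] \<mu> \<nu> by metis
  have "ennreal (wass X d \<mu> \<nu>) \<le> transport_cost d \<pi>"
    by (rule wass_le_transport_cost[OF \<pi>])
  also have "\<dots> \<le> transport_cost (\<lambda>x y. dY (f x) (f y)) \<pi>"
    unfolding transport_cost_def using X.couplings_D(2)[OF \<pi>] noncontracting
    by (intro nn_integral_mono ennreal_leI) auto
  also have "\<dots> = transport_cost dY \<sigma>"
    using transport_cost_push_pair[OF \<pi>] \<open>push_pair \<pi> = \<sigma>\<close> by simp
  finally show "ennreal (wass X d \<mu> \<nu>) \<le> transport_cost dY \<sigma>" .
next
  have "\<mu> \<Otimes>\<^sub>M \<nu> \<in> couplings X d \<mu> \<nu>"
    using \<mu> \<nu> by (rule X.pair_measure_in_couplings)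
  then show "push_pair (\<mu> \<Otimes>\<^sub>M \<nu>) \<in> couplings Y dY (push \<mu>) (push \<nu>)"
    and "transport_cost dY (push_pair (\<mu> \<Otimes>\<^sub>M \<nu>)) < \<infinity>"
    unfolding transport_cost_push_pair[OF \<open>\<mu> \<Otimes>\<^sub>M \<nu> \<in> couplings X d \<mu> \<nu>\<close>]
    by (rule push_pair_in_couplings, rule X.transport_cost_less_top)
qed

end

lemma wass_push_weighted_sum_le:
  assumes X: "finite_Metric_space X d" and "finite I"
    and Y: "\<And>i. i \<in> I \<Longrightarrow> Metric_space (Y i) (dY i)" and f: "\<And>i. i \<in> I \<Longrightarrow> f i \<in> X \<rightarrow> Y i"
    and p: "\<And>i. i \<in> I \<Longrightarrow> 0 \<le> p i" and "0 < D"
    and distortion: "\<And>x y. x \<in> X \<Longrightarrow> y \<in> X \<Longrightarrow> (\<Sum>i\<in>I. p i * dY i (f i x) (f i y)) \<le> D * d x y"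
    and \<mu>: "\<mu> \<in> P1 X d" and \<nu>: "\<nu> \<in> P1 X d"
  shows "(\<Sum>i\<in>I. p i * wass (Y i) (dY i) (distr \<mu> (mborel (Y i) (dY i)) (f i))
           (distr \<nu> (mborel (Y i) (dY i)) (f i))) \<le> D * wass X d \<mu> \<nu>"
proof -
  interpret X: finite_Metric_space X d by fact
  have map: "finite_metric_map X d (Y i) (dY i) (f i)" if "i \<in> I" for i
    using X Y[OF that] f[OF that] by (simp add: finite_metric_map_def finite_metric_map_axioms_def)
  have rescale: "(\<Sum>i\<in>I. p i / D * a i) \<le> b \<longleftrightarrow> (\<Sum>i\<in>I. p i * a i) \<le> D * b" for a b
    using \<open>0 < D\<close> by (simp add: sum_divide_distrib[symmetric] pos_divide_le_eq mult.commute[of b])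
  let ?W = "\<lambda>i. wass (Y i) (dY i) (distr \<mu> (mborel (Y i) (dY i)) (f i)) (distr \<nu> (mborel (Y i) (dY i)) (f i))"
  have "(\<Sum>i\<in>I. p i / D * ?W i) \<le> wass X d \<mu> \<nu>"
  proof (rule le_wass_if_le_transport_costs)
    fix \<pi> assume \<pi>: "\<pi> \<in> couplings X d \<mu> \<nu>"
    have weights_nonneg: "0 \<le> p i / D" "0 \<le> ?W i" if "i \<in> I" for i
      using p[OF that] \<open>0 < D\<close> by (simp_all add: wass_def)
    have "ennreal (\<Sum>i\<in>I. p i / D * ?W i) = (\<Sum>i\<in>I. ennreal (p i / D * ?W i))"
      by (rule sum_ennreal[symmetric]) (simp add: weights_nonneg del: times_divide_eq_left)
    also have "\<dots> = (\<Sum>i\<in>I. ennreal (p i / D) * ennreal (?W i))"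
      by (intro sum.cong refl ennreal_mult weights_nonneg)
    also have "\<dots> \<le> (\<Sum>i\<in>I. ennreal (p i / D) * transport_cost (\<lambda>x y. dY i (f i x) (f i y)) \<pi>)"
      using finite_metric_map.wass_push_le_transport_cost[OF map \<pi>]
      by (intro sum_mono mult_left_mono) auto
    also have "\<dots> \<le> transport_cost d \<pi>"
      unfolding transport_cost_def
    proof (rule sum_nn_integral_le)
      show "(\<lambda>z. dY i (f i (fst z)) (f i (snd z))) \<in> borel_measurable \<pi>" for i
        using X.couplings_D(1)[OF \<pi>] by (simp add: measurable_if_sets_eq_Pow)
      show "0 \<le> dY i (f i (fst z)) (f i (snd z))" if "i \<in> I" "z \<in> space \<pi>" for i z
        using that f[OF \<open>i \<in> I\<close>] X.couplings_D(2)[OF \<pi>] Metric_space.nonneg[OF Y[OF \<open>i \<in> I\<close>]] by auto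
      show "(\<Sum>i\<in>I. p i / D * dY i (f i (fst z)) (f i (snd z))) \<le> d (fst z) (snd z)" if "z \<in> space \<pi>" for z
        unfolding rescale using that distortion X.couplings_D(2)[OF \<pi>] by auto
    qed (use \<open>finite I\<close> weights_nonneg in auto)
    finally show "ennreal (\<Sum>i\<in>I. p i / D * ?W i) \<le> transport_cost d \<pi>" .
  next
    show "\<mu> \<Otimes>\<^sub>M \<nu> \<in> couplings X d \<mu> \<nu>"
      using \<mu> \<nu> by (rule X.pair_measure_in_couplings)
    then show "transport_cost d (\<mu> \<Otimes>\<^sub>M \<nu>) < \<infinity>"
      by (rule X.transport_cost_less_top)
  qed
  then show ?thesis
    unfolding rescale .
qed

theorem lemma2:
  fixes X :: "'a set" and d :: "'a \<Rightarrow> 'a \<Rightarrow> real"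
    and I :: "'i set" and Y :: "'i \<Rightarrow> 'b set" and dY :: "'i \<Rightarrow> 'b \<Rightarrow> 'b \<Rightarrow> real"
    and D :: real and p :: "'i \<Rightarrow> real" and f :: "'i \<Rightarrow> 'a \<Rightarrow> 'b"
  assumes "Metric_space X d" and "finite X"
    and "finite I" and "\<forall>i\<in>I. Metric_space (Y i) (dY i)"
    and "stoch_embedding X d I Y dY D p f"
  shows "stoch_embedding (P1 X d) (wass X d) I (\<lambda>i. P1 (Y i) (dY i)) (\<lambda>i. wass (Y i) (dY i))
           D p (\<lambda>i \<mu>. distr \<mu> (mborel (Y i) (dY i)) (f i))"
proof -
  have X: "finite_Metric_space X d"
    using assms(1,2) by (simp add: finite_Metric_space_def finite_Metric_space_axioms_def)
  have emb: "1 \<le> D" "\<forall>i\<in>I. p i \<ge> 0" "(\<Sum>i\<in>I. p i) = 1" "\<forall>i\<in>I. f i \<in> X \<rightarrow> Y i"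
    "\<forall>i\<in>I. \<forall>x\<in>X. \<forall>y\<in>X. d x y \<le> dY i (f i x) (f i y)"
    "\<forall>x\<in>X. \<forall>y\<in>X. (\<Sum>i\<in>I. p i * dY i (f i x) (f i y)) \<le> D * d x y"
    using assms(5) by (simp_all add: stoch_embedding_def)
  have map: "finite_metric_map X d (Y i) (dY i) (f i)" if "i \<in> I" for i
    using X assms(4) emb(4) that by (simp add: finite_metric_map_def finite_metric_map_axioms_def)
  have distortion: "(\<Sum>i\<in>I. p i * wass (Y i) (dY i) (distr \<mu> (mborel (Y i) (dY i)) (f i))
      (distr \<nu> (mborel (Y i) (dY i)) (f i))) \<le> D * wass X d \<mu> \<nu>"
    if "\<mu> \<in> P1 X d" "\<nu> \<in> P1 X d" for \<mu> \<nu>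
    using X assms(3,4) emb(1,2,4,6) that by (intro wass_push_weighted_sum_le) auto
  show ?thesis
    unfolding stoch_embedding_def
    using assms(3) emb(1-3,5) finite_metric_map.push_in_P1[OF map]
      finite_metric_map.wass_le_wass_push[OF map] distortion
    by auto
qed

end
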